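(* In the virtually-$\mathbb{Z}$ setting described in the context, let $\Phi:A^G\to A^G$ be a cellular automaton with neighborhood $S$ and local map $\mu$, and let $\Delta=\max\{\mathrm{imp}(s):s\in S\}$. Let $V=V_{[a,b]}$ be a section with $l(V)\geq\Delta$ and let $u\in A^L$ be a $V$-blocking word. Then for all $x,y\in A^G$ with $x|_L=y|_L=u$ and $x|_{Br_+(V)}=y|_{Br_+(V)}$, one has $\Phi^t(x)|_{Br_+(V)}=\Phi^t(y)|_{Br_+(V)}$ for all $t\in\mathbb{N}$. Symmetrically, for all $x,y\in A^G$ with $x|_L=y|_L=u$ and $x|_{Br_-(V)}=y|_{Br_-(V)}$, one has $\Phi^t(x)|_{Br_-(V)}=\Phi^t(y)|_{Br_-(V)}$ for all $t\in\mathbb{N}$.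
   Context: $G$ is a finitely generated group, $A$ a finite alphabet, $H\leq G$ a subgroup of finite index and $\varphi:H\to\mathbb{Z}$ a group isomorphism. $F\subseteq G$ is a finite set with $1_G\in F$ containing exactly one element of each right coset $Hg$, so every $g\in G$ decomposes uniquely as $g=zf$ with $z\in H$, $f\in F$. Define $p:G\to\mathbb{Z}$ by $p(zf)=\varphi(z)$. For $X\subseteq\mathbb{Z}$, $V_X=p^{-1}(X)$; $V_{\{k\}}$ is the $k$-th vertebra; $V_X$ is a section if $X=[a,b]$ is a finite integer interval, with length $l(V_{[a,b]})=b-a+1$, right arm $Br_+(V_{[a,b]})=V_{(b,\infty)}$ and left arm $Br_-(V_{[a,b]})=V_{(-\infty,a)}$ (integer intervals). For $s\in G$, $\mathrm{imp}(s)=\max\{|p(gs)-p(g)|:g\in V_{\{k\}}\}$, which is independent of $k$. A cellular automaton $\Phi$ with neighborhood $S\subseteq G$ finite and local map $\mu:A^S\to A$ is $\Phi(x)(g)=\mu(s\mapsto x(gs))$. For finite $V\subseteq G$, a pattern $u\in A^L$ ($L\subseteq G$ finite) is $V$-blocking for $\Phi$ if for all $x,y\in A^G$ with $x|_L=y|_L=u$ one has $\Phi^t(x)|_V=\Phi^t(y)|_V$ for all $t\in\mathbb{N}$. *)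

theory Defs
  imports "HOL-Algebra.Algebra"
begin

definition vz_proj :: "('g, 'b) monoid_scheme \<Rightarrow> 'g set \<Rightarrow> ('g \<Rightarrow> int) \<Rightarrow> 'g set \<Rightarrow> 'g \<Rightarrow> int" where
  "vz_proj Gr H \<phi> F g = \<phi> (THE z. z \<in> H \<and> (\<exists>f\<in>F. g = z \<otimes>\<^bsub>Gr\<^esub> f))"

definition vz_V :: "('g, 'b) monoid_scheme \<Rightarrow> 'g set \<Rightarrow> ('g \<Rightarrow> int) \<Rightarrow> 'g set \<Rightarrow> int set \<Rightarrow> 'g set" where
  "vz_V Gr H \<phi> F XX = {g \<in> carrier Gr. vz_proj Gr H \<phi> F g \<in> XX}"

text \<open>imp(s), computed on the vertebra V_{0} (independent of k by the paper).\<close>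
definition vz_imp :: "('g, 'b) monoid_scheme \<Rightarrow> 'g set \<Rightarrow> ('g \<Rightarrow> int) \<Rightarrow> 'g set \<Rightarrow> 'g \<Rightarrow> int" where
  "vz_imp Gr H \<phi> F s = Max {\<bar>vz_proj Gr H \<phi> F (g \<otimes>\<^bsub>Gr\<^esub> s) - vz_proj Gr H \<phi> F g\<bar> | g. g \<in> vz_V Gr H \<phi> F {0}}"

definition CA :: "('g, 'b) monoid_scheme \<Rightarrow> 'g set \<Rightarrow> (('g \<Rightarrow> 'a) \<Rightarrow> 'a) \<Rightarrow> ('g \<Rightarrow> 'a) \<Rightarrow> ('g \<Rightarrow> 'a)" where
  "CA Gr S \<mu> x = (\<lambda>g. \<mu> (\<lambda>s. if s \<in> S then x (g \<otimes>\<^bsub>Gr\<^esub> s) else undefined))"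

definition blocking :: "(('g \<Rightarrow> 'a) \<Rightarrow> ('g \<Rightarrow> 'a)) \<Rightarrow> 'g set \<Rightarrow> 'g set \<Rightarrow> ('g \<Rightarrow> 'a) \<Rightarrow> bool" where
  "blocking \<Phi> V L u \<longleftrightarrow> (\<forall>x y. (\<forall>g\<in>L. x g = u g \<and> y g = u g) \<longrightarrow>
      (\<forall>t::nat. \<forall>g\<in>V. (\<Phi> ^^ t) x g = (\<Phi> ^^ t) y g))"

end

theory Submission
  imports Defs
begin

text \<open>A neighbour \<open>g s\<close> of a cell \<open>g\<close> lies at most \<open>imp(s) \<le> \<Delta> \<le> l(V)\<close> vertebrae
  away from \<open>g\<close>, because \<open>p(z h) = \<phi>(z) + p(h)\<close> for \<open>z \<in> H\<close> reduces \<open>p(g s) - p(g)\<close> to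
  \<open>p(f s) - p(f)\<close> for the representative \<open>f \<in> F\<close> of \<open>g\<close>. Hence a cell of the right arm only
  reads cells of \<open>V\<close> or of the right arm, while on \<open>V\<close> the two orbits agree forever because
  \<open>u\<close> is \<open>V\<close>-blocking; by induction on \<open>t\<close> the orbits agree on \<open>V \<union> Br\<^sub>+(V)\<close>.
  The left arm is symmetric.\<close>

lemma CA_cong:
  assumes "\<And>s. s \<in> S \<Longrightarrow> x (g \<otimes>\<^bsub>G\<^esub> s) = y (g \<otimes>\<^bsub>G\<^esub> s)"
  shows "CA G S \<mu> x g = CA G S \<mu> y g"
  unfolding CA_def using assms by (simp cong: if_cong)

lemma CA_iterates_agree:
  assumes blocked: "\<And>t g. g \<in> B \<Longrightarrow> (CA G S \<mu> ^^ t) x g = (CA G S \<mu> ^^ t) y g"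
    and initial: "\<And>g. g \<in> W \<Longrightarrow> x g = y g"
    and closed: "\<And>g s. g \<in> W - B \<Longrightarrow> s \<in> S \<Longrightarrow> g \<otimes>\<^bsub>G\<^esub> s \<in> W"
    and "g \<in> W"
  shows "(CA G S \<mu> ^^ t) x g = (CA G S \<mu> ^^ t) y g"
  using \<open>g \<in> W\<close>
proof (induction t arbitrary: g)
  case 0
  then show ?case using initial by simp
next
  case (Suc t)
  show ?case
  proof (cases "g \<in> B")
    case True
    then show ?thesis using blocked by blast
  next
    case False
    then have "g \<otimes>\<^bsub>G\<^esub> s \<in> W" if "s \<in> S" for s using closed Suc.prems that by blast
    then show ?thesis unfolding funpow.simps comp_apply by (intro CA_cong Suc.IH)
  qed
qed

locale virtually_Z = group G for G :: "('g, 'b) monoid_scheme" (structure) +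
  fixes H F :: "'g set" and \<phi> :: "'g \<Rightarrow> int"
  assumes subgroup_H: "subgroup H G"
    and iso_phi: "\<phi> \<in> iso (G\<lparr>carrier := H\<rparr>) integer_group"
    and F_sub: "F \<subseteq> carrier G"
    and F_trans: "\<forall>g\<in>carrier G. \<exists>!f. f \<in> F \<and> f \<in> H #> g"
begin

abbreviation proj :: "'g \<Rightarrow> int" where
  "proj \<equiv> vz_proj G H \<phi> F"

lemma H_carrier: "z \<in> H \<Longrightarrow> z \<in> carrier G"
  using subgroup.mem_carrier[OF subgroup_H] .

lemma phi_mult: "z \<in> H \<Longrightarrow> w \<in> H \<Longrightarrow> \<phi> (z \<otimes> w) = \<phi> z + \<phi> w"
  using iso_phi by (simp add: iso_def hom_def)

lemma phi_one: "\<phi> \<one> = 0"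
  using phi_mult[of \<one> \<one>] subgroup.one_closed[OF subgroup_H] by simp

lemma transversal_decomp:
  assumes "g \<in> carrier G"
  obtains z f where "z \<in> H" "f \<in> F" "g = z \<otimes> f"
proof -
  obtain f where f: "f \<in> F" "f \<in> H #> g" using F_trans assms by blast
  then obtain h where h: "h \<in> H" "f = h \<otimes> g" unfolding r_coset_def by auto
  have "g = inv h \<otimes> f" using h H_carrier assms by (simp add: inv_solve_left)
  moreover have "inv h \<in> H" using h subgroup.m_inv_closed[OF subgroup_H] by blast
  ultimately show ?thesis using f that by blast
qed

lemma transversal_decomp_unique:
  assumes "z \<in> H" "f \<in> F" "z' \<in> H" "f' \<in> F" and eq: "z \<otimes> f = z' \<otimes> f'"
  shows "z = z'" and "f = f'"
proof -
  have c: "z \<in> carrier G" "z' \<in> carrier G" "f \<in> carrier G" "f' \<in> carrier G"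
    using assms F_sub H_carrier by auto
  have "f' = (inv z' \<otimes> z) \<otimes> f"
    using eq c by (metis inv_solve_left m_assoc m_closed inv_closed)
  moreover have "inv z' \<otimes> z \<in> H"
    using assms subgroup.m_closed[OF subgroup_H] subgroup.m_inv_closed[OF subgroup_H] by blast
  ultimately have "f' \<in> H #> f" using rcosI[OF _ subgroup.subset[OF subgroup_H] c(3)] by simp
  moreover have "f \<in> H #> f" using rcos_self[OF c(3) subgroup_H] .
  ultimately show "f = f'" using F_trans c(3) assms by blast
  then show "z = z'" using eq c r_cancel by blast
qed

lemma proj_decomp: "z \<in> H \<Longrightarrow> f \<in> F \<Longrightarrow> proj (z \<otimes> f) = \<phi> z"
  unfolding vz_proj_def
  by (rule arg_cong[where f = \<phi>], rule the_equality)
     (auto dest: transversal_decomp_unique)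

lemma proj_transversal: "f \<in> F \<Longrightarrow> proj f = 0"
  using proj_decomp[of \<one> f] subgroup.one_closed[OF subgroup_H] F_sub phi_one by auto

lemma proj_mult_left:
  assumes "z \<in> H" "h \<in> carrier G"
  shows "proj (z \<otimes> h) = \<phi> z + proj h"
proof -
  obtain w f where wf: "w \<in> H" "f \<in> F" "h = w \<otimes> f"
    using transversal_decomp[OF assms(2)] .
  have "z \<otimes> h = (z \<otimes> w) \<otimes> f"
    using wf assms F_sub H_carrier by (auto simp: m_assoc)
  moreover have "z \<otimes> w \<in> H" using assms wf subgroup.m_closed[OF subgroup_H] by blast
  ultimately show ?thesis using wf assms proj_decomp phi_mult by simp
qed

lemma vertebra_zero_subset: "vz_V G H \<phi> F {0} \<subseteq> F"
proof
  fix g assume "g \<in> vz_V G H \<phi> F {0}"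
  then have g: "g \<in> carrier G" "proj g = 0" unfolding vz_V_def by auto
  obtain z f where zf: "z \<in> H" "f \<in> F" "g = z \<otimes> f" using transversal_decomp[OF g(1)] .
  have "\<phi> z = \<phi> \<one>" using g zf proj_decomp phi_one by simp
  then have "z = \<one>"
    using iso_phi zf(1) subgroup.one_closed[OF subgroup_H]
    by (auto simp: iso_def bij_betw_def dest: inj_onD)
  then show "g \<in> F" using zf F_sub by auto
qed

lemma proj_mult_right_le_imp:
  assumes "finite F" "g \<in> carrier G" "s \<in> carrier G"
  shows "\<bar>proj (g \<otimes> s) - proj g\<bar> \<le> vz_imp G H \<phi> F s"
proof -
  obtain z f where zf: "z \<in> H" "f \<in> F" "g = z \<otimes> f" using transversal_decomp[OF assms(2)] .
  have f: "f \<in> carrier G" using zf F_sub by auto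
  have "proj (g \<otimes> s) - proj g = proj (f \<otimes> s) - proj f"
    using zf f assms H_carrier proj_mult_left by (simp add: m_assoc)
  moreover have "f \<in> vz_V G H \<phi> F {0}"
    unfolding vz_V_def using f zf proj_transversal by simp
  moreover have "finite (vz_V G H \<phi> F {0})"
    using vertebra_zero_subset assms(1) by (rule finite_subset)
  ultimately show ?thesis unfolding vz_imp_def by (auto intro: Max_ge)
qed

lemma proj_mult_le_Max_imp:
  assumes "finite F" "finite S" "S \<subseteq> carrier G" "g \<in> carrier G" "s \<in> S"
  shows "\<bar>proj (g \<otimes> s) - proj g\<bar> \<le> Max (insert 0 (vz_imp G H \<phi> F ` S))"
  using proj_mult_right_le_imp[OF assms(1,4), of s] assms by (force intro: order_trans[OF _ Max_ge])

lemma CA_iterates_agree_on_vertebrae: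
  assumes "finite F" "finite S" "S \<subseteq> carrier G"
    and radius: "Max (insert 0 (vz_imp G H \<phi> F ` S)) \<le> r"
    and blk: "blocking (CA G S \<mu>) (vz_V G H \<phi> F J) L u"
    and pattern: "\<forall>g\<in>L. x g = u g \<and> y g = u g"
    and outside: "\<forall>g\<in>vz_V G H \<phi> F (I - J). x g = y g"
    and closed: "\<And>k j. k \<in> I - J \<Longrightarrow> \<bar>j - k\<bar> \<le> r \<Longrightarrow> j \<in> I"
    and "g \<in> vz_V G H \<phi> F I"
  shows "(CA G S \<mu> ^^ t) x g = (CA G S \<mu> ^^ t) y g"
proof (rule CA_iterates_agree[where B = "vz_V G H \<phi> F J" and W = "vz_V G H \<phi> F I"])
  show blocked: "(CA G S \<mu> ^^ t') x g' = (CA G S \<mu> ^^ t') y g'"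
    if "g' \<in> vz_V G H \<phi> F J" for t' g'
    using blk pattern that unfolding blocking_def by blast
  show "x g' = y g'" if "g' \<in> vz_V G H \<phi> F I" for g'
    using blocked[of g' 0] outside that by (cases "proj g' \<in> J") (auto simp: vz_V_def)
  show "g' \<otimes> s \<in> vz_V G H \<phi> F I"
    if "g' \<in> vz_V G H \<phi> F I - vz_V G H \<phi> F J" "s \<in> S" for g' s
  proof -
    have g': "g' \<in> carrier G" "proj g' \<in> I - J" using that(1) by (auto simp: vz_V_def)
    have "\<bar>proj (g' \<otimes> s) - proj g'\<bar> \<le> r"
      using proj_mult_le_Max_imp[OF assms(1-3) g'(1) that(2)] radius by linarith
    then show ?thesis
      using closed[OF g'(2)] g'(1) that(2) assms(3) by (auto simp: vz_V_def)
  qed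
qed fact

end

theorem lemma3:
  fixes G :: "('g, 'b) monoid_scheme" (structure)
    and H F S L :: "'g set"
    and \<phi> :: "'g \<Rightarrow> int"
    and \<mu> :: "('g \<Rightarrow> 'a::finite) \<Rightarrow> 'a"
    and u :: "'g \<Rightarrow> 'a"
    and a b :: int
  assumes grp: "group G"
    and fg: "\<exists>K. finite K \<and> K \<subseteq> carrier G \<and> generate G K = carrier G"
    and sub: "subgroup H G"
    and findex: "finite (rcosets H)"
    and iso: "\<phi> \<in> iso (G\<lparr>carrier := H\<rparr>) integer_group"
    and F_sub: "F \<subseteq> carrier G" and F_fin: "finite F" and F_one: "\<one> \<in> F"
    and F_trans: "\<forall>g\<in>carrier G. \<exists>!f. f \<in> F \<and> f \<in> H #> g"
    and S_sub: "S \<subseteq> carrier G" and S_fin: "finite S"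
    and ab: "a \<le> b"
    and len: "b - a + 1 \<ge> Max (insert 0 (vz_imp G H \<phi> F ` S))"
    and L_sub: "L \<subseteq> carrier G" and L_fin: "finite L"
    and blk: "blocking (CA G S \<mu>) (vz_V G H \<phi> F {a..b}) L u"
  shows "(\<forall>x y. (\<forall>g\<in>L. x g = u g \<and> y g = u g) \<and>
            (\<forall>g\<in>vz_V G H \<phi> F {b<..}. x g = y g) \<longrightarrow>
            (\<forall>t::nat. \<forall>g\<in>vz_V G H \<phi> F {b<..}. (CA G S \<mu> ^^ t) x g = (CA G S \<mu> ^^ t) y g))
       \<and> (\<forall>x y. (\<forall>g\<in>L. x g = u g \<and> y g = u g) \<and>
            (\<forall>g\<in>vz_V G H \<phi> F {..<a}. x g = y g) \<longrightarrow>
            (\<forall>t::nat. \<forall>g\<in>vz_V G H \<phi> F {..<a}. (CA G S \<mu> ^^ t) x g = (CA G S \<mu> ^^ t) y g))"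
proof -
  interpret virtually_Z G H F \<phi>
    using grp sub iso F_sub F_trans by (simp add: virtually_Z_def virtually_Z_axioms_def)
  show ?thesis
  proof (intro conjI allI impI ballI; elim conjE)
    fix x y t g
    assume "\<forall>g\<in>L. x g = u g \<and> y g = u g" "\<forall>g\<in>vz_V G H \<phi> F {b<..}. x g = y g"
      and "g \<in> vz_V G H \<phi> F {b<..}"
    then show "(CA G S \<mu> ^^ t) x g = (CA G S \<mu> ^^ t) y g"
      using ab by (intro CA_iterates_agree_on_vertebrae[OF F_fin S_fin S_sub len blk, where I = "{a..}"])
        (auto simp: vz_V_def)
  next
    fix x y t g
    assume "\<forall>g\<in>L. x g = u g \<and> y g = u g" "\<forall>g\<in>vz_V G H \<phi> F {..<a}. x g = y g"
      and "g \<in> vz_V G H \<phi> F {..<a}"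
    then show "(CA G S \<mu> ^^ t) x g = (CA G S \<mu> ^^ t) y g"
      using ab by (intro CA_iterates_agree_on_vertebrae[OF F_fin S_fin S_sub len blk, where I = "{..b}"])
        (auto simp: vz_V_def)
  qed
qed

end
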